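(* Let $\alpha_1,\alpha_2$ be positive integers with $\alpha_2\ge2$ and $n=\alpha_1+\alpha_2$. The Laplacian spectrum of $C(\alpha_1,\alpha_2)$ is $\{n^{(\alpha_1)},\ \alpha_1^{(\alpha_2-1)},\ 0^{(1)}\}$ (superscripts are multiplicities), so it has exactly three distinct Laplacian eigenvalues. Moreover, a $\mathcal{C}$-graph $C(\alpha_1,\dots,\alpha_k)$ ($k$ even) has exactly three distinct Laplacian eigenvalues if and only if $k=2$ and $\alpha_2\ge2$.
   Context: $C(\alpha_1,\dots,\alpha_k)$ is defined recursively by $C(\alpha_1)=\overline{K_{\alpha_1}}$ (edgeless graph) and $C(\alpha_1,\dots,\alpha_i)=\overline{C(\alpha_1,\dots,\alpha_{i-1})\cup K_{\alpha_i}}$ for $i=2,\dots,k$ (disjoint union, then complement); with $k$ even it is called a $\mathcal{C}$-graph. In particular $C(\alpha_1,\alpha_2)$ is the complete split graph $K_{\alpha_1}\vee\overline{K_{\alpha_2}}$. Laplacian eigenvalues are those of $L=D-A$. *)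

theory Defs
  imports "Jordan_Normal_Form.Char_Poly"
begin

text \<open>The list is given in REVERSED order
  (last parameter first).  Vertices are the naturals below the sum of the
  parameters; the vertices of C(a1,...,a(i-1)) are the first ones and the
  new clique K_ai occupies the next ai vertices.\<close>
fun cg_rev :: "nat list \<Rightarrow> nat \<Rightarrow> nat \<Rightarrow> bool" where
  "cg_rev [] = (\<lambda>u v. False)"
| "cg_rev [a] = (\<lambda>u v. False)"
| "cg_rev (a # b # rest) =
     (\<lambda>u v. let N = sum_list (b # rest) in
        u \<noteq> v \<and> \<not> ((u < N \<and> v < N \<and> cg_rev (b # rest) u v) \<or>
                     (N \<le> u \<and> N \<le> v)))"

definition cgraph_adj :: "nat list \<Rightarrow> nat \<Rightarrow> nat \<Rightarrow> bool" where
  "cgraph_adj as = cg_rev (rev as)"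

definition cgraph_order :: "nat list \<Rightarrow> nat" where
  "cgraph_order as = sum_list as"

definition cgraph_laplacian :: "nat list \<Rightarrow> real mat" where
  "cgraph_laplacian as = (let n = cgraph_order as in
     mat n n (\<lambda>(i,j). if i = j then real (card {w. w < n \<and> cgraph_adj as i w})
                      else if cgraph_adj as i j then -1 else 0))"

end

theory Submission
  imports Defs
begin

text \<open>For the complete split graph with clique of size a1 and independent set of size a2, the
  Laplacian becomes upper triangular in the basis consisting of the all-ones vector, the indicator
  of the independent set and unit vectors; its diagonal is 0, then a1 + a2 (a1 times), then a1
  (a2 - 1 times), which gives the characteristic polynomial. A C-graph with at least four
  parameters is C(ys, p, q, r) with ys nonempty; vectors constant on the four blocks belonging to
  ys, p, q and r are mapped to such vectors by the Laplacian, and four of them are eigenvectors for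
  the distinct eigenvalues 0, r, N + p + r and N + p + q + r, where N = sum ys.\<close>

definition graph_laplacian :: "nat \<Rightarrow> (nat \<Rightarrow> nat \<Rightarrow> bool) \<Rightarrow> real mat" where
  "graph_laplacian n E = mat n n (\<lambda>(i, j).
     if i = j then real (card {w. w < n \<and> E i w}) else if E i j then -1 else 0)"

lemma graph_laplacian_carrier [simp]: "graph_laplacian n E \<in> carrier_mat n n"
  by (simp add: graph_laplacian_def)

lemma sum_if_eq_card:
  "finite A \<Longrightarrow> (\<Sum>x\<in>A. if P x then c else 0) = of_nat (card {x\<in>A. P x}) * (c :: 'a :: semiring_1)"
  by (simp flip: sum.inter_filter)

lemma sum_indicator_interval:
  assumes "b \<le> n"
  shows "(\<Sum>j<n. if a \<le> j \<and> j < b then c else 0) = of_nat (b - a) * (c :: 'a :: semiring_1)"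
proof -
  have "{j\<in>{..<n}. a \<le> j \<and> j < b} = {a..<b}" using assms by auto
  then show ?thesis by (simp add: sum_if_eq_card)
qed

lemma graph_laplacian_row_sum:
  assumes "i < n" and "\<not> E i i"
  shows "(\<Sum>j<n. graph_laplacian n E $$ (i, j) * f j) = (\<Sum>j<n. if E i j then f i - f j else 0)"
proof -
  have deg: "real (card {w. w < n \<and> E i w}) = (\<Sum>j<n. if E i j then 1 else 0)"
    by (simp add: sum_if_eq_card)
  have "(\<Sum>j<n. graph_laplacian n E $$ (i, j) * f j)
      = (\<Sum>j<n. (if j = i then real (card {w. w < n \<and> E i w}) * f i else 0) - (if E i j then f j else 0))"
    using assms by (intro sum.cong) (auto simp: graph_laplacian_def)
  also have "\<dots> = (\<Sum>j<n. if E i j then 1 else 0) * f i - (\<Sum>j<n. if E i j then f j else 0)"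
    using assms(1) by (simp add: sum_subtractf deg)
  also have "\<dots> = (\<Sum>j<n. if E i j then f i - f j else 0)"
    by (simp add: sum_distrib_right flip: sum_subtractf) (rule sum.cong; simp)
  finally show ?thesis .
qed

lemma eigenvalueI_coordinates:
  fixes A :: "'a :: comm_ring_1 mat"
  assumes A: "A \<in> carrier_mat n n" and "k < n" and "f k \<noteq> 0"
    and eq: "\<And>i. i < n \<Longrightarrow> (\<Sum>j<n. A $$ (i, j) * f j) = \<mu> * f i"
  shows "eigenvalue A \<mu>"
  unfolding eigenvalue_def eigenvector_def
proof (intro exI conjI)
  show "vec n f \<in> carrier_vec (dim_row A)" using A by simp
  show "vec n f \<noteq> 0\<^sub>v (dim_row A)"
    using A assms(2,3) by (metis carrier_matD(1) index_vec index_zero_vec(1))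
  show "A *\<^sub>v vec n f = \<mu> \<cdot>\<^sub>v vec n f"
    using A eq by (intro eq_vecI) (auto simp: scalar_prod_def lessThan_atLeast0)
qed

lemma finite_eigenvalues:
  fixes A :: "'a :: field mat"
  assumes A: "A \<in> carrier_mat n n"
  shows "finite {\<mu>. eigenvalue A \<mu>}"
proof -
  have "char_poly A \<noteq> 0"
    using degree_monic_char_poly[OF A] by auto
  then show ?thesis
    using poly_roots_finite eigenvalue_root_char_poly[OF A] by simp
qed

lemma similar_mat_if_intertwined:
  fixes A P T :: "'a :: field mat"
  assumes A: "A \<in> carrier_mat n n" and P: "P \<in> carrier_mat n n" and T: "T \<in> carrier_mat n n"
    and "det P \<noteq> 0" and AP: "A * P = P * T"
  shows "similar_mat A T"
proof -
  have "P \<in> Units (ring_mat TYPE('a) n ())"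
    using det_non_zero_imp_unit[OF P assms(4), of "()"] .
  then obtain Q where Q: "Q \<in> carrier_mat n n" and QP: "Q * P = 1\<^sub>m n" and PQ: "P * Q = 1\<^sub>m n"
    by (auto simp: Units_def ring_mat_def)
  have "A = A * (P * Q)" using A by (simp add: PQ)
  also have "\<dots> = P * T * Q" using A P Q by (simp flip: assoc_mult_mat add: AP)
  finally show ?thesis
    using A P Q T PQ QP by (intro similar_matI[of _ _ P Q n]) auto
qed

lemma cgraph_adj_snoc:
  "cgraph_adj (as @ [a]) u v \<longleftrightarrow> u \<noteq> v
     \<and> \<not> (u < sum_list as \<and> v < sum_list as \<and> cgraph_adj as u v)
     \<and> \<not> (sum_list as \<le> u \<and> sum_list as \<le> v)"
  by (cases "rev as") (auto simp: cgraph_adj_def Let_def dest: arg_cong[of _ _ sum_list])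

lemma cgraph_adj_irrefl: "\<not> cgraph_adj as u u"
  by (cases as rule: rev_cases) (simp add: cgraph_adj_def, simp add: cgraph_adj_snoc)

lemma cgraph_laplacian_eq: "cgraph_laplacian as = graph_laplacian (sum_list as) (cgraph_adj as)"
  by (simp add: cgraph_laplacian_def graph_laplacian_def cgraph_order_def Let_def)

lemma cgraph_laplacian_carrier: "cgraph_laplacian as \<in> carrier_mat (sum_list as) (sum_list as)"
  by (simp add: cgraph_laplacian_eq)

lemma cgraph_laplacian_row_sum:
  assumes "i < sum_list as"
  shows "(\<Sum>j<sum_list as. cgraph_laplacian as $$ (i, j) * f j)
       = (\<Sum>j<sum_list as. if cgraph_adj as i j then f i - f j else 0)"
  unfolding cgraph_laplacian_eq using assms cgraph_adj_irrefl by (rule graph_laplacian_row_sum)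

lemma cgraph_adj_split: "cgraph_adj [a1, a2] u v \<longleftrightarrow> u \<noteq> v \<and> (u < a1 \<or> v < a1)"
  using cgraph_adj_snoc[of "[a1]" a2] by (auto simp: cgraph_adj_def)

lemma cgraph_split_degree:
  assumes "i < a1 + a2"
  shows "card {w. w < a1 + a2 \<and> cgraph_adj [a1, a2] i w} = (if i < a1 then a1 + a2 - 1 else a1)"
proof (cases "i < a1")
  case True
  then have "{w. w < a1 + a2 \<and> cgraph_adj [a1, a2] i w} = {..<a1 + a2} - {i}"
    by (auto simp: cgraph_adj_split)
  with True assms show ?thesis by simp
next
  case False
  with assms have "{w. w < a1 + a2 \<and> cgraph_adj [a1, a2] i w} = {..<a1}"
    by (auto simp: cgraph_adj_split)
  with False show ?thesis by simp
qed

text \<open>The columns of this matrix are the all-ones vector (column 0), the indicator of the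
  independent set (column a1) and unit vectors; on them the Laplacian acts triangularly.\<close>
definition split_basis_mat :: "nat \<Rightarrow> nat \<Rightarrow> real mat" where
  "split_basis_mat a1 a2 = mat (a1 + a2) (a1 + a2) (\<lambda>(i, j).
     if j = 0 then 1 else if j = a1 then (if a1 \<le> i then 1 else 0) else if i = j then 1 else 0)"

definition split_diag :: "nat \<Rightarrow> nat \<Rightarrow> nat \<Rightarrow> real" where
  "split_diag a1 a2 k = (if k = 0 then 0 else if k \<le> a1 then real (a1 + a2) else real a1)"

definition split_triangular_mat :: "nat \<Rightarrow> nat \<Rightarrow> real mat" where
  "split_triangular_mat a1 a2 = mat (a1 + a2) (a1 + a2) (\<lambda>(j, k).
     (if j = k then split_diag a1 a2 k else 0)
     + (if j = 0 \<and> k \<noteq> 0 then (if k = a1 then - real a2 else -1) else 0)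
     + (if j = a1 \<and> a1 < k then 1 else 0))"

lemma det_split_basis_mat:
  assumes "a2 > 0"
  shows "det (split_basis_mat a1 a2) = 1"
proof -
  let ?P = "split_basis_mat a1 a2"
  have "det ?P = prod_list (diag_mat ?P)"
    by (rule det_lower_triangular[of "a1 + a2"]) (auto simp: split_basis_mat_def)
  also have "diag_mat ?P = map (\<lambda>_. 1) [0..<a1 + a2]"
    using assms by (auto simp: diag_mat_def split_basis_mat_def)
  finally show ?thesis by (simp add: map_replicate_const)
qed

lemma split_basis_mat_mult_triangular_index:
  assumes "a2 > 0" and "i < a1 + a2" and "k < a1 + a2"
  shows "(split_basis_mat a1 a2 * split_triangular_mat a1 a2) $$ (i, k)
       = split_basis_mat a1 a2 $$ (i, k) * split_diag a1 a2 k
         + split_basis_mat a1 a2 $$ (i, 0) * (if k \<noteq> 0 then (if k = a1 then - real a2 else -1) else 0)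
         + split_basis_mat a1 a2 $$ (i, a1) * (if a1 < k then 1 else 0)"
    (is "(?P * ?T) $$ (i, k) = _")
proof -
  have "(?P * ?T) $$ (i, k) = (\<Sum>j<a1 + a2. ?P $$ (i, j) * ?T $$ (j, k))"
    using assms
    by (simp add: split_basis_mat_def split_triangular_mat_def scalar_prod_def lessThan_atLeast0)
  also have "\<dots> = ?P $$ (i, k) * split_diag a1 a2 k
      + ?P $$ (i, 0) * (if k \<noteq> 0 then (if k = a1 then - real a2 else -1) else 0)
      + ?P $$ (i, a1) * (if a1 < k then 1 else 0)"
    using assms
    by (simp add: split_triangular_mat_def distrib_left sum.distrib if_distrib[of "(*) _"] cong: if_cong)
  finally show ?thesis .
qed

lemma split_laplacian_intertwines:
  assumes a1: "a1 > 0" and a2: "a2 > 0"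
  shows "cgraph_laplacian [a1, a2] * split_basis_mat a1 a2
       = split_basis_mat a1 a2 * split_triangular_mat a1 a2"
    (is "?L * ?P = ?P * ?T")
proof (rule eq_matI)
  let ?n = "a1 + a2"
  have L: "?L \<in> carrier_mat ?n ?n" by (simp add: cgraph_laplacian_eq)
  fix i k assume "i < dim_row (?P * ?T)" and "k < dim_col (?P * ?T)"
  then have i: "i < ?n" and k: "k < ?n"
    by (simp_all add: split_basis_mat_def split_triangular_mat_def)
  have LP_sum: "(?L * ?P) $$ (i, k) = (\<Sum>j<?n. ?L $$ (i, j) * ?P $$ (j, k))"
    using L i k by (simp add: split_basis_mat_def scalar_prod_def lessThan_atLeast0)
  also have "\<dots> = (\<Sum>j<?n. if cgraph_adj [a1, a2] i j then ?P $$ (i, k) - ?P $$ (j, k) else 0)"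
    using cgraph_laplacian_row_sum[of i "[a1, a2]"] i by simp
  finally have LP: "(?L * ?P) $$ (i, k) = \<dots>" .
  note PT = split_basis_mat_mult_triangular_index[OF a2 i k]
  consider "k = 0" | "k = a1" | "k \<noteq> 0" "k \<noteq> a1" by blast
  then show "(?L * ?P) $$ (i, k) = (?P * ?T) $$ (i, k)"
  proof cases
    case 1
    then show ?thesis
      unfolding LP PT using i k by (auto intro!: sum.neutral simp: split_basis_mat_def split_diag_def)
  next
    case 2
    have "(?L * ?P) $$ (i, k) = (\<Sum>j<?n.
        if (if i < a1 then a1 else 0) \<le> j \<and> j < (if i < a1 then ?n else a1)
        then (if i < a1 then -1 else 1) else 0)"
      unfolding LP using 2 i a1 a2 by (intro sum.cong) (auto simp: split_basis_mat_def cgraph_adj_split)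
    also have "\<dots> = (if i < a1 then - real a2 else real a1)"
      by (subst sum_indicator_interval) auto
    finally show ?thesis
      unfolding PT using 2 i a1 a2 by (simp add: split_basis_mat_def split_diag_def)
  next
    case 3
    have "(?L * ?P) $$ (i, k) = (\<Sum>j<?n. if j = k then ?L $$ (i, j) else 0)"
      unfolding LP_sum using 3 k by (intro sum.cong) (auto simp: split_basis_mat_def)
    also have "\<dots> = ?L $$ (i, k)"
      using k by simp
    also have "\<dots> = (?P * ?T) $$ (i, k)"
      unfolding PT using 3 i k a1 a2
      by (simp add: cgraph_laplacian_eq graph_laplacian_def cgraph_split_degree)
        (auto simp: cgraph_adj_split split_basis_mat_def split_diag_def)
    finally show ?thesis .
  qed
qed (simp_all add: cgraph_laplacian_eq graph_laplacian_def split_basis_mat_def split_triangular_mat_def)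

lemma char_poly_split_triangular:
  assumes "a2 > 0"
  shows "char_poly (split_triangular_mat a1 a2)
       = [:0, 1:] * [:- real (a1 + a2), 1:] ^ a1 * [:- real a1, 1:] ^ (a2 - 1)"
proof -
  let ?n = "a1 + a2" and ?f = "\<lambda>k. [:- split_diag a1 a2 k, 1:]"
  have "char_poly (split_triangular_mat a1 a2) = (\<Prod>k\<leftarrow>[0..<?n]. ?f k)"
  proof (subst char_poly_upper_triangular[of _ ?n])
    show "(\<Prod>a\<leftarrow>diag_mat (split_triangular_mat a1 a2). [:- a, 1:]) = (\<Prod>k\<leftarrow>[0..<?n]. ?f k)"
      by (simp add: diag_mat_def split_triangular_mat_def comp_def)
        (intro arg_cong[where f = prod_list] map_cong; simp)
  qed (auto simp: split_triangular_mat_def upper_triangular_def)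
  also have "\<dots> = (\<Prod>k\<in>{0..<?n}. ?f k)"
    by (metis distinct_upt prod.distinct_set_conv_list set_upt)
  also have "\<dots> = ?f 0 * (\<Prod>k\<in>{1..<?n}. ?f k)"
    using assms by (simp add: prod.atLeast_Suc_lessThan)
  also have "(\<Prod>k\<in>{1..<?n}. ?f k) = (\<Prod>k\<in>{1..<Suc a1}. ?f k) * (\<Prod>k\<in>{Suc a1..<?n}. ?f k)"
    using assms by (intro prod.atLeastLessThan_concat[symmetric]) auto
  also have "(\<Prod>k\<in>{1..<Suc a1}. ?f k) = [:- real (a1 + a2), 1:] ^ a1"
    by (simp add: split_diag_def)
  also have "(\<Prod>k\<in>{Suc a1..<?n}. ?f k) = [:- real a1, 1:] ^ (a2 - 1)"
    by (simp add: split_diag_def)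
  finally show ?thesis by (simp add: split_diag_def mult.assoc)
qed

lemma char_poly_cgraph_split:
  assumes a1: "a1 > 0" and a2: "a2 > 0"
  shows "char_poly (cgraph_laplacian [a1, a2])
       = [:- real (a1 + a2), 1:] ^ a1 * [:- real a1, 1:] ^ (a2 - 1) * [:0, 1:]"
proof -
  have "similar_mat (cgraph_laplacian [a1, a2]) (split_triangular_mat a1 a2)"
    using det_split_basis_mat[OF a2] split_laplacian_intertwines[OF a1 a2]
    by (intro similar_mat_if_intertwined[of _ "a1 + a2"])
      (simp_all add: cgraph_laplacian_eq split_basis_mat_def split_triangular_mat_def)
  then show ?thesis
    by (simp add: char_poly_similar char_poly_split_triangular[OF a2] ac_simps)
qed

lemma cgraph_split_eigenvalues:
  assumes a1: "a1 > 0" and a2: "a2 > 0"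
  shows "{\<mu>. eigenvalue (cgraph_laplacian [a1, a2]) \<mu>}
       = (if a2 \<ge> 2 then {real (a1 + a2), real a1, 0} else {real (a1 + a2), 0})"
proof -
  have "eigenvalue (cgraph_laplacian [a1, a2]) \<mu> \<longleftrightarrow>
      \<mu> = real (a1 + a2) \<or> (a2 \<ge> 2 \<and> \<mu> = real a1) \<or> \<mu> = 0" for \<mu>
    using a1 a2
    by (simp add: eigenvalue_root_char_poly[OF cgraph_laplacian_carrier[of "[a1, a2]"]]
        char_poly_cgraph_split poly_power del: of_nat_add) auto
  then show ?thesis by auto
qed

lemma card_cgraph_split_eigenvalues:
  assumes "a1 > 0" and "a2 > 0"
  shows "card {\<mu>. eigenvalue (cgraph_laplacian [a1, a2]) \<mu>} = (if a2 \<ge> 2 then 3 else 2)"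
  using assms by (simp add: cgraph_split_eigenvalues)

lemma cgraph_laplacian_block_row_sum:
  fixes ys :: "nat list" and p q r :: nat and e d c b :: real
  defines "N \<equiv> sum_list ys"
  defines "f \<equiv> \<lambda>j. if j < N then e else if j < N + p then d else if j < N + p + q then c else b"
  assumes i: "i < N + p + q + r"
  shows "(\<Sum>j<N + p + q + r. cgraph_laplacian (ys @ [p, q, r]) $$ (i, j) * f j) =
     (if i < N then real p * (e - d) + real r * (e - b)
      else if i < N + p then real N * (d - e) + real r * (d - b)
      else if i < N + p + q then real r * (c - b)
      else real N * (b - e) + real p * (b - d) + real q * (b - c))"
proof -
  let ?n = "N + p + q + r" and ?E = "cgraph_adj (ys @ [p, q, r])"
  have E1: "cgraph_adj (ys @ [p]) u v \<longleftrightarrow> u \<noteq> v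
      \<and> \<not> (u < N \<and> v < N \<and> cgraph_adj ys u v) \<and> \<not> (N \<le> u \<and> N \<le> v)" for u v
    unfolding N_def by (rule cgraph_adj_snoc)
  have E2: "cgraph_adj (ys @ [p, q]) u v \<longleftrightarrow> u \<noteq> v
      \<and> \<not> (u < N + p \<and> v < N + p \<and> cgraph_adj (ys @ [p]) u v)
      \<and> \<not> (N + p \<le> u \<and> N + p \<le> v)" for u v
    using cgraph_adj_snoc[of "ys @ [p]" q] by (simp add: N_def)
  have E3: "?E u v \<longleftrightarrow> u \<noteq> v
      \<and> \<not> (u < N + p + q \<and> v < N + p + q \<and> cgraph_adj (ys @ [p, q]) u v)
      \<and> \<not> (N + p + q \<le> u \<and> N + p + q \<le> v)" for u v
    using cgraph_adj_snoc[of "ys @ [p, q]" r] by (simp add: N_def add.assoc)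
  note adj = E3 E2 E1
  have "(\<Sum>j<?n. cgraph_laplacian (ys @ [p, q, r]) $$ (i, j) * f j)
      = (\<Sum>j<?n. if ?E i j then f i - f j else 0)"
    using cgraph_laplacian_row_sum[of i "ys @ [p, q, r]" f] i by (simp add: N_def add.assoc)
  also have "\<dots> = (if i < N then real p * (e - d) + real r * (e - b)
      else if i < N + p then real N * (d - e) + real r * (d - b)
      else if i < N + p + q then real r * (c - b)
      else real N * (b - e) + real p * (b - d) + real q * (b - c))"
  proof -
    let ?I = "\<lambda>a b' (x :: real) j. if a \<le> j \<and> j < b' then x else 0"
    note sums = sum.distrib sum_indicator_interval sum_indicator_interval[where a = 0, simplified]
    consider "i < N" | "N \<le> i" "i < N + p" | "N + p \<le> i" "i < N + p + q" | "N + p + q \<le> i"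
      by linarith
    then show ?thesis
    proof cases
      case 1
      have "(\<Sum>j<?n. if ?E i j then f i - f j else 0)
          = (\<Sum>j<?n. ?I N (N + p) (e - d) j + ?I (N + p + q) ?n (e - b) j)"
        using 1 by (intro sum.cong) (auto simp: adj f_def)
      with 1 show ?thesis by (simp add: sums cong del: sum.cong_simp)
    next
      case 2
      have "(\<Sum>j<?n. if ?E i j then f i - f j else 0)
          = (\<Sum>j<?n. ?I 0 N (d - e) j + ?I (N + p + q) ?n (d - b) j)"
        using 2 by (intro sum.cong) (auto simp: adj f_def)
      with 2 show ?thesis by (simp add: sums cong del: sum.cong_simp)
    next
      case 3
      have "(\<Sum>j<?n. if ?E i j then f i - f j else 0) = (\<Sum>j<?n. ?I (N + p + q) ?n (c - b) j)"
        using 3 by (intro sum.cong) (auto simp: adj f_def)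
      with 3 show ?thesis by (simp add: sums cong del: sum.cong_simp)
    next
      case 4
      have "(\<Sum>j<?n. if ?E i j then f i - f j else 0)
          = (\<Sum>j<?n. ?I 0 N (b - e) j + ?I N (N + p) (b - d) j + ?I (N + p) (N + p + q) (b - c) j)"
        using 4 i by (intro sum.cong) (auto simp: adj f_def)
      with 4 show ?thesis by (simp add: sums cong del: sum.cong_simp)
    qed
  qed
  finally show ?thesis .
qed

text \<open>The four equations say that (e, d, c, b) is an eigenvector of the quotient matrix of the
  partition into the blocks of ys, p, q and r.\<close>
lemma cgraph_laplacian_block_eigenvalue:
  fixes ys :: "nat list" and p q r :: nat and e d c b \<mu> :: real
  defines "N \<equiv> sum_list ys"
  assumes "N > 0" and "e \<noteq> 0"
    and "real p * (e - d) + real r * (e - b) = \<mu> * e"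
    and "real N * (d - e) + real r * (d - b) = \<mu> * d"
    and "real r * (c - b) = \<mu> * c"
    and "real N * (b - e) + real p * (b - d) + real q * (b - c) = \<mu> * b"
  shows "eigenvalue (cgraph_laplacian (ys @ [p, q, r])) \<mu>"
proof -
  let ?f = "\<lambda>j. if j < N then e else if j < N + p then d else if j < N + p + q then c else b"
  show ?thesis
  proof (rule eigenvalueI_coordinates[of _ "N + p + q + r" 0 ?f])
    show "cgraph_laplacian (ys @ [p, q, r]) \<in> carrier_mat (N + p + q + r) (N + p + q + r)"
      using cgraph_laplacian_carrier[of "ys @ [p, q, r]"] by (simp add: N_def add.assoc)
  next
    fix i assume "i < N + p + q + r"
    then show "(\<Sum>j<N + p + q + r. cgraph_laplacian (ys @ [p, q, r]) $$ (i, j) * ?f j) = \<mu> * ?f i"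
      using assms(4-) unfolding N_def by (simp add: cgraph_laplacian_block_row_sum)
  qed (use assms(2,3) in auto)
qed

lemma card_cgraph_append3_eigenvalues:
  assumes N: "sum_list ys > 0" and p: "p > 0" and q: "q > 0" and r: "r > 0"
  shows "card {\<mu>. eigenvalue (cgraph_laplacian (ys @ [p, q, r])) \<mu>} \<ge> 4"
proof -
  let ?N = "sum_list ys" and ?L = "cgraph_laplacian (ys @ [p, q, r])"
  let ?S = "{0, real r, real (?N + p + r), real (?N + p + q + r)}"
  have "eigenvalue ?L 0"
    by (rule cgraph_laplacian_block_eigenvalue[where e = 1 and d = 1 and c = 1 and b = 1]) (use N in auto)
  moreover have "eigenvalue ?L (real r)"
    by (rule cgraph_laplacian_block_eigenvalue
        [where e = "real q" and d = "real q" and c = "- real (?N + p)" and b = 0])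
      (use N q in \<open>auto simp: algebra_simps\<close>)
  moreover have "eigenvalue ?L (real (?N + p + r))"
    by (rule cgraph_laplacian_block_eigenvalue[where e = "real p" and d = "- real ?N" and c = 0 and b = 0])
      (use N p in \<open>auto simp: algebra_simps\<close>)
  moreover have "eigenvalue ?L (real (?N + p + q + r))"
    by (rule cgraph_laplacian_block_eigenvalue
        [where e = "real r" and d = "real r" and c = "real r" and b = "- real (?N + p + q)"])
      (use N r in \<open>auto simp: algebra_simps\<close>)
  ultimately have "?S \<subseteq> {\<mu>. eigenvalue ?L \<mu>}" by auto
  moreover have "card ?S = 4" using N p q r by simp
  ultimately show ?thesis
    using card_mono[OF finite_eigenvalues[OF cgraph_laplacian_carrier]] by metis
qed

lemma four_le_card_cgraph_eigenvalues:
  assumes "length as \<ge> 4" and pos: "\<forall>a\<in>set as. a > 0"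
  shows "card {\<mu>. eigenvalue (cgraph_laplacian as) \<mu>} \<ge> 4"
proof -
  define ys where "ys = take (length as - 3) as"
  have "length (drop (length as - 3) as) = 3"
    using assms(1) by simp
  then obtain p q r where pqr: "drop (length as - 3) as = [p, q, r]"
    by (auto simp: length_Suc_conv numeral_3_eq_3 simp del: length_drop)
  have as: "as = ys @ [p, q, r]"
    unfolding ys_def by (metis append_take_drop_id pqr)
  have "ys \<noteq> []"
    using assms(1) by (auto simp: ys_def)
  with pos have "sum_list ys > 0"
    by (cases ys) (auto simp: as)
  with pos show ?thesis
    unfolding as by (intro card_cgraph_append3_eigenvalues) auto
qed

theorem mainTheorem9:
  shows "(\<forall>a1 a2 :: nat. a1 > 0 \<longrightarrow> a2 \<ge> 2 \<longrightarrow>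
            char_poly (cgraph_laplacian [a1, a2]) =
              [:- real (a1 + a2), 1:] ^ a1 * [:- real a1, 1:] ^ (a2 - 1) * [:0, 1:]
          \<and> card {x. eigenvalue (cgraph_laplacian [a1, a2]) x} = 3)
       \<and> (\<forall>as :: nat list. even (length as) \<longrightarrow> length as \<ge> 2 \<longrightarrow> (\<forall>a\<in>set as. a > 0) \<longrightarrow>
            (card {x. eigenvalue (cgraph_laplacian as) x} = 3 \<longleftrightarrow>
               (length as = 2 \<and> as ! 1 \<ge> 2)))"
proof (intro conjI allI impI)
  fix a1 a2 :: nat
  assume "a1 > 0" and "a2 \<ge> 2"
  then show "char_poly (cgraph_laplacian [a1, a2]) =
      [:- real (a1 + a2), 1:] ^ a1 * [:- real a1, 1:] ^ (a2 - 1) * [:0, 1:]"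
    and "card {x. eigenvalue (cgraph_laplacian [a1, a2]) x} = 3"
    by (simp_all add: char_poly_cgraph_split card_cgraph_split_eigenvalues)
next
  fix as :: "nat list"
  assume even: "even (length as)" and "length as \<ge> 2" and pos: "\<forall>a\<in>set as. a > 0"
  show "card {x. eigenvalue (cgraph_laplacian as) x} = 3 \<longleftrightarrow> (length as = 2 \<and> as ! 1 \<ge> 2)"
  proof (cases "length as = 2")
    case True
    then obtain a1 a2 where "as = [a1, a2]"
      by (auto simp: length_Suc_conv numeral_2_eq_2)
    with pos show ?thesis by (simp add: card_cgraph_split_eigenvalues)
  next
    case False
    with even \<open>length as \<ge> 2\<close> have "length as \<ge> 4" by presburger
    then have "card {x. eigenvalue (cgraph_laplacian as) x} \<ge> 4"
      using pos by (rule four_le_card_cgraph_eigenvalues)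
    with False show ?thesis by simp
  qed
qed

end
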